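(* Let $\underline{\mu}\le\overline{\mu}$ be real numbers and $p(a)=\sup_{y\in[\underline{\mu},\overline{\mu}]}(ya)$. Let $\phi:\mathbb{R}\to\mathbb{R}$ satisfy $|\phi(x)-\phi(y)|\le|x-y|$ for all $x,y$, and set $v(x,t)=\sup_{y\in[\underline{\mu},\overline{\mu}]}\phi(x+ty)$ for $(x,t)\in\mathbb{R}\times[0,\infty)$. Let $\varepsilon\in(0,1)$ and $v_\varepsilon=v*\zeta_\varepsilon$. Then $$f_\varepsilon(x,t):=\partial_tv_\varepsilon(x,t)-p(\partial_xv_\varepsilon(x,t))\ge0\quad\text{for all }(x,t)\in\mathbb{R}\times(\varepsilon,\infty).$$
   Context: $\zeta\in C_0^\infty(\mathbb{R}^2)$ is a fixed nonnegative function with unit integral and support in $\{(x,t):|x|<1,\ 0<t<1\}$; for $\varepsilon\in(0,1)$, $\zeta_\varepsilon(x,t)=\varepsilon^{-2}\zeta(x/\varepsilon,t/\varepsilon)$, and for a locally summable $u(x,t)$, $u*\zeta_\varepsilon(x,t)=\int u(x-y,t-s)\zeta_\varepsilon(y,s)\,dy\,ds$ (convolution in $(x,t)$). *)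

theory Defs
  imports "HOL-Analysis.Analysis"
begin

text \<open>C-infinity functions on R^2: greatest set of functions that are (Frechet)
  differentiable everywhere and whose two partial derivatives are again in the set.\<close>
coinductive C_inf :: "(real \<times> real \<Rightarrow> real) \<Rightarrow> bool" where
  "(\<And>z. (f has_derivative (\<lambda>h. fst h * g1 z + snd h * g2 z)) (at z))
   \<Longrightarrow> C_inf g1 \<Longrightarrow> C_inf g2 \<Longrightarrow> C_inf f"

definition zeta_eps :: "(real \<times> real \<Rightarrow> real) \<Rightarrow> real \<Rightarrow> real \<times> real \<Rightarrow> real" where
  "zeta_eps \<zeta> \<epsilon> = (\<lambda>(x, t). \<zeta> (x / \<epsilon>, t / \<epsilon>) / \<epsilon>\<^sup>2)"

definition conv2 :: "(real \<Rightarrow> real \<Rightarrow> real) \<Rightarrow> (real \<times> real \<Rightarrow> real) \<Rightarrow> real \<Rightarrow> real \<Rightarrow> real" where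
  "conv2 u k x t = integral UNIV (\<lambda>(y, s). u (x - y) (t - s) * k (y, s))"

definition hamil :: "real \<Rightarrow> real \<Rightarrow> real \<Rightarrow> real" where
  "hamil mu_lo mu_hi a = (SUP y\<in>{mu_lo..mu_hi}. y * a)"

definition vsol :: "real \<Rightarrow> real \<Rightarrow> (real \<Rightarrow> real) \<Rightarrow> real \<Rightarrow> real \<Rightarrow> real" where
  "vsol mu_lo mu_hi \<phi> x t = (SUP y\<in>{mu_lo..mu_hi}. \<phi> (x + t * y))"

end

theory Submission
  imports Defs
begin

(* The value function v satisfies the dynamic programming inequality
   v (x + h a) t <= v x (t + h)  for t, h >= 0 and a in [mu_lo, mu_hi]:
   moving with speed a for time h and then with speed y for time t is the same as moving
   for time t + h with an averaged speed, which again lies in [mu_lo, mu_hi].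
   The mollifier is nonnegative and supported in times 0 < s < eps, so for t > eps the
   convolution only sees v at nonnegative times and inherits the inequality.
   Differentiating at h = 0 gives a * d_x v_eps <= d_t v_eps for every admissible a, and the
   supremum over a is the claim.  The derivatives of v_eps exist by differentiation under
   the integral sign, as v is Lipschitz and the kernel is C^1 with compact support. *)

lemma lipschitz_on_SUP:
  fixes f :: "'i \<Rightarrow> 'a::metric_space \<Rightarrow> real"
  assumes "I \<noteq> {}" and lip: "\<And>i. i \<in> I \<Longrightarrow> L-lipschitz_on S (f i)"
    and bdd: "\<And>x. x \<in> S \<Longrightarrow> bdd_above ((\<lambda>i. f i x) ` I)"
  shows "L-lipschitz_on S (\<lambda>x. SUP i\<in>I. f i x)"
proof (rule lipschitz_onI)
  have le: "(SUP i\<in>I. f i x) \<le> (SUP i\<in>I. f i y) + L * dist x y" if "x \<in> S" "y \<in> S" for x y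
  proof (rule cSUP_least[OF \<open>I \<noteq> {}\<close>])
    fix i assume "i \<in> I"
    have "f i x \<le> f i y + L * dist x y"
      using lipschitz_onD[OF lip[OF \<open>i \<in> I\<close>] that] by (simp add: dist_real_def)
    also have "f i y \<le> (SUP i\<in>I. f i y)"
      by (rule cSUP_upper[OF \<open>i \<in> I\<close> bdd[OF \<open>y \<in> S\<close>]])
    finally show "f i x \<le> (SUP i\<in>I. f i y) + L * dist x y" by simp
  qed
  fix x y assume "x \<in> S" "y \<in> S"
  then show "dist (SUP i\<in>I. f i x) (SUP i\<in>I. f i y) \<le> L * dist x y"
    using le[of x y] le[of y x] by (simp add: dist_real_def dist_commute abs_le_iff)
next
  show "0 \<le> L"
    using \<open>I \<noteq> {}\<close> lip lipschitz_on_nonneg by blast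
qed

lemma diff_mem_cbox_symmetric_iff:
  fixes p w c :: "'a::euclidean_space"
  shows "p - w \<in> cbox (-c) c \<longleftrightarrow> w \<in> cbox (p - c) (p + c)"
  by (auto simp: mem_box inner_diff_left inner_add_left)

lemma has_derivative_partials_eq_0:
  fixes K :: "real \<times> real \<Rightarrow> real"
  assumes K: "(K has_derivative (\<lambda>h. fst h * k1 + snd h * k2)) (at z)"
    and "open S" "z \<in> S" "\<And>w. w \<in> S \<Longrightarrow> K w = 0"
  shows "k1 = 0" "k2 = 0"
proof -
  have "((\<lambda>_. 0) has_derivative (\<lambda>h. fst h * k1 + snd h * k2)) (at z)"
    using has_derivative_transform_within_open[OF K \<open>open S\<close> \<open>z \<in> S\<close>] assms(4) by simp
  then have "(\<lambda>h. fst h * k1 + snd h * k2) = (\<lambda>_. 0)"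
    using has_derivative_const has_derivative_unique by blast
  from fun_cong[OF this, of "(1, 0)"] fun_cong[OF this, of "(0, 1)"]
  show "k1 = 0" "k2 = 0" by simp_all
qed

lemma slope_le_of_shift_le:
  fixes u :: "real \<Rightarrow> real \<Rightarrow> real"
  assumes dt: "((\<lambda>s. u x s) has_real_derivative F) (at t)"
    and dx: "((\<lambda>y. u y t) has_real_derivative G) (at x)"
    and shift: "\<And>h. 0 < h \<Longrightarrow> u (x + h * a) t \<le> u x (t + h)"
  shows "a * G \<le> F"
proof (rule ccontr)
  assume "\<not> a * G \<le> F"
  define D where "D h = u x (t + h) - u (x + h * a) t" for h
  have "((\<lambda>h. u x (t + h)) has_real_derivative F) (at 0)"
    using DERIV_shift[of "\<lambda>s. u x s" F 0 t] dt by (simp add: add.commute)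
  moreover have "((\<lambda>h. u (x + h * a) t) has_real_derivative G * a) (at 0)"
    by (rule DERIV_chain2[where f = "\<lambda>y. u y t"]) (auto intro!: derivative_eq_intros simp: dx)
  ultimately have "(D has_real_derivative F - G * a) (at 0)"
    unfolding D_def by (rule DERIV_diff)
  moreover have "F - G * a < 0"
    using \<open>\<not> a * G \<le> F\<close> by (simp add: mult.commute)
  ultimately obtain d where "0 < d" "\<And>h. 0 < h \<Longrightarrow> h < d \<Longrightarrow> D h < D 0"
    using DERIV_neg_dec_right by (metis add_0)
  then have "D (d / 2) < D 0"
    by simp
  moreover have "D 0 = 0"
    by (simp add: D_def)
  moreover have "0 \<le> D (d / 2)"
    using shift[of "d / 2"] \<open>0 < d\<close> by (simp add: D_def)
  ultimately show False by simp
qed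

lemma has_integral_conv2_integrand_cbox:
  fixes V :: "real \<Rightarrow> real \<Rightarrow> real" and K :: "real \<times> real \<Rightarrow> real"
  assumes int: "(\<lambda>w. case_prod V w * K ((x, t) - w)) integrable_on cbox c d"
    and supp: "\<And>w. w \<notin> cbox c d \<Longrightarrow> K ((x, t) - w) = 0"
  shows "((\<lambda>(y, s). V (x - y) (t - s) * K (y, s)) has_integral
           integral (cbox c d) (\<lambda>w. case_prod V w * K ((x, t) - w))) UNIV"
proof -
  define g where "g = (\<lambda>w. case_prod V w * K ((x, t) - w))"
  define S where "S = (\<lambda>z. (x, t) - z) ` cbox c d"
  have "((\<lambda>z. g ((-1) *\<^sub>R z + (x, t))) has_integral integral (cbox c d) g) S"
    using has_integral_affinity[OF int[folded g_def, unfolded has_integral_integral], of "-1" "(x, t)"]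
    by (simp add: S_def)
  moreover have "(-1) *\<^sub>R z + (x, t) = (x, t) - z" for z :: "real \<times> real"
    by simp
  ultimately have "((\<lambda>z. g ((x, t) - z)) has_integral integral (cbox c d) g) S"
    by simp
  then have "((\<lambda>z. g ((x, t) - z)) has_integral integral (cbox c d) g) UNIV"
  proof (rule has_integral_on_superset[OF _ _ subset_UNIV])
    fix z assume "z \<notin> S"
    have "(x, t) - z \<notin> cbox c d"
    proof
      assume "(x, t) - z \<in> cbox c d"
      then have "(x, t) - ((x, t) - z) \<in> S" unfolding S_def by (rule imageI)
      with \<open>z \<notin> S\<close> show False by simp
    qed
    from supp[OF this] show "g ((x, t) - z) = 0"
      by (simp add: g_def)
  qed
  moreover have "(\<lambda>z. g ((x, t) - z)) = (\<lambda>(y, s). V (x - y) (t - s) * K (y, s))"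
    by (auto simp: g_def fun_eq_iff)
  ultimately show ?thesis by (simp only: g_def)
qed

(* The box does not depend on h, so the convolution along the line through (x, t) in
   direction (a, b) is an integral over a fixed box, as differentiation under the integral
   sign requires. *)
lemma has_integral_conv2_integrand_near:
  fixes V :: "real \<Rightarrow> real \<Rightarrow> real" and K :: "real \<times> real \<Rightarrow> real"
  assumes V: "continuous_on UNIV (case_prod V)" and K: "continuous_on UNIV K"
    and supp: "\<And>z. z \<notin> cbox (-c) c \<Longrightarrow> K z = 0" and h: "\<bar>h\<bar> \<le> 1"
  shows "((\<lambda>(y, s). V (x + h * a - y) (t + h * b - s) * K (y, s)) has_integral
    integral (cbox ((x, t) - c - (\<bar>a\<bar>, \<bar>b\<bar>)) ((x, t) + c + (\<bar>a\<bar>, \<bar>b\<bar>)))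
      (\<lambda>w. case_prod V w * K ((x + h * a, t + h * b) - w))) UNIV"
proof (rule has_integral_conv2_integrand_cbox)
  have "continuous_on UNIV (\<lambda>w. K ((x + h * a, t + h * b) - w))"
    by (rule continuous_on_compose2[OF K]) (auto intro!: continuous_intros)
  then show "(\<lambda>w. case_prod V w * K ((x + h * a, t + h * b) - w)) integrable_on
      cbox ((x, t) - c - (\<bar>a\<bar>, \<bar>b\<bar>)) ((x, t) + c + (\<bar>a\<bar>, \<bar>b\<bar>))"
    by (intro integrable_continuous continuous_on_subset[OF continuous_on_mult[OF V]]) auto
next
  fix w assume w: "w \<notin> cbox ((x, t) - c - (\<bar>a\<bar>, \<bar>b\<bar>)) ((x, t) + c + (\<bar>a\<bar>, \<bar>b\<bar>))"
  have "(x + h * a, t + h * b) - w \<notin> cbox (-c) c"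
  proof
    assume "(x + h * a, t + h * b) - w \<in> cbox (-c) c"
    then have "w \<in> cbox ((x + h * a, t + h * b) - c) ((x + h * a, t + h * b) + c)"
      by (simp add: diff_mem_cbox_symmetric_iff)
    moreover have "\<bar>h * a\<bar> \<le> \<bar>a\<bar>" "\<bar>h * b\<bar> \<le> \<bar>b\<bar>"
      using h by (auto simp: abs_mult intro: mult_left_le_one_le)
    ultimately show False
      using w by (cases c, cases w) (auto simp: abs_le_iff)
  qed
  then show "K ((x + h * a, t + h * b) - w) = 0" by (rule supp)
qed

lemma conv2_eq_integral_cbox_near:
  fixes V :: "real \<Rightarrow> real \<Rightarrow> real" and K :: "real \<times> real \<Rightarrow> real"
  assumes "continuous_on UNIV (case_prod V)" and "continuous_on UNIV K"
    and "\<And>z. z \<notin> cbox (-c) c \<Longrightarrow> K z = 0" and "\<bar>h\<bar> \<le> 1"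
  shows "conv2 V K (x + h * a) (t + h * b) =
    integral (cbox ((x, t) - c - (\<bar>a\<bar>, \<bar>b\<bar>)) ((x, t) + c + (\<bar>a\<bar>, \<bar>b\<bar>)))
      (\<lambda>w. case_prod V w * K ((x + h * a, t + h * b) - w))"
  unfolding conv2_def using has_integral_conv2_integrand_near[OF assms] by (rule integral_unique)

lemma has_integral_conv2:
  fixes V :: "real \<Rightarrow> real \<Rightarrow> real" and K :: "real \<times> real \<Rightarrow> real"
  assumes V: "continuous_on UNIV (case_prod V)" and K: "continuous_on UNIV K"
    and supp: "bounded {z. K z \<noteq> 0}"
  shows "((\<lambda>(y, s). V (x - y) (t - s) * K (y, s)) has_integral conv2 V K x t) UNIV"
proof -
  obtain c where "{z. K z \<noteq> 0} \<subseteq> cbox (-c) c"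
    using bounded_subset_cbox_symmetric[OF supp] by blast
  then have K_zero: "K z = 0" if "z \<notin> cbox (-c) c" for z
    using that by blast
  show ?thesis
    using has_integral_conv2_integrand_near[OF V K K_zero, where h = 0 and x = x and t = t]
      conv2_eq_integral_cbox_near[OF V K K_zero, where h = 0 and x = x and t = t]
    by simp
qed

lemma conv2_mono:
  fixes V :: "real \<Rightarrow> real \<Rightarrow> real" and K :: "real \<times> real \<Rightarrow> real"
  assumes V: "continuous_on UNIV (case_prod V)" and K: "continuous_on UNIV K"
    and supp: "bounded {z. K z \<noteq> 0}" and K_nonneg: "\<And>z. 0 \<le> K z"
    and le: "\<And>y s. K (y, s) \<noteq> 0 \<Longrightarrow> V (x - y) (t - s) \<le> V (x' - y) (t' - s)"
  shows "conv2 V K x t \<le> conv2 V K x' t'"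
proof (rule has_integral_le[OF has_integral_conv2 has_integral_conv2])
  fix z :: "real \<times> real"
  obtain y s where z: "z = (y, s)" by (cases z)
  show "(\<lambda>(y, s). V (x - y) (t - s) * K (y, s)) z \<le> (\<lambda>(y, s). V (x' - y) (t' - s) * K (y, s)) z"
    using le[of y s] K_nonneg[of z] by (cases "K z = 0") (auto simp: z intro: mult_right_mono)
qed (use assms in auto)

context
  fixes V :: "real \<Rightarrow> real \<Rightarrow> real" and K k1 k2 :: "real \<times> real \<Rightarrow> real"
  assumes V_cont: "continuous_on UNIV (case_prod V)"
    and K_deriv: "\<And>z. (K has_derivative (\<lambda>h. fst h * k1 z + snd h * k2 z)) (at z)"
    and k1_cont: "continuous_on UNIV k1" and k2_cont: "continuous_on UNIV k2"
begin

lemma has_real_derivative_integral_kernel_translate: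
  "((\<lambda>h. integral (cbox lo hi) (\<lambda>w. case_prod V w * K ((x + h * a, t + h * b) - w)))
     has_real_derivative
     integral (cbox lo hi) (\<lambda>w. case_prod V w * (a * k1 ((x, t) - w) + b * k2 ((x, t) - w)))) (at 0)"
proof -
  define L where "L = (\<lambda>z. a * k1 z + b * k2 z)"
  define p where "p = (\<lambda>h. (x + h * a, t + h * b))"
  have K_cont: "continuous_on UNIV K"
    using has_derivative_continuous_on[OF K_deriv] .
  have L_cont: "continuous_on UNIV L"
    unfolding L_def by (intro continuous_intros k1_cont k2_cont)
  have "((\<lambda>h. integral (cbox lo hi) (\<lambda>w. case_prod V w * K (p h - w))) has_real_derivative
      integral (cbox lo hi) (\<lambda>w. case_prod V w * L (p 0 - w))) (at 0 within UNIV)"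
  proof (rule leibniz_rule_field_derivative[where fx = "\<lambda>h w. case_prod V w * L (p h - w)"])
    fix h w
    have "((\<lambda>h. p h - w) has_derivative (\<lambda>h. (h * a, h * b))) (at h)"
      unfolding p_def by (auto intro!: derivative_eq_intros)
    from has_derivative_compose[OF this K_deriv]
    have "((\<lambda>h. K (p h - w)) has_real_derivative L (p h - w)) (at h)"
      by (rule has_derivative_imp_has_field_derivative) (simp add: L_def algebra_simps)
    then show "((\<lambda>h. case_prod V w * K (p h - w)) has_real_derivative case_prod V w * L (p h - w))
        (at h within UNIV)"
      by (rule DERIV_cmult)
  next
    fix h
    have "continuous_on UNIV (\<lambda>w. K (p h - w))"
      by (rule continuous_on_compose2[OF K_cont]) (auto intro!: continuous_intros)
    then show "(\<lambda>w. case_prod V w * K (p h - w)) integrable_on cbox lo hi"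
      by (intro integrable_continuous continuous_on_subset[OF continuous_on_mult[OF V_cont]]) auto
  next
    have "continuous_on UNIV (\<lambda>q :: real \<times> real \<times> real. case_prod V (snd q))"
      by (rule continuous_on_compose2[OF V_cont]) (auto intro!: continuous_intros)
    moreover have "continuous_on UNIV (\<lambda>q :: real \<times> real \<times> real. L (p (fst q) - snd q))"
      unfolding p_def by (rule continuous_on_compose2[OF L_cont]) (auto intro!: continuous_intros)
    ultimately have "continuous_on UNIV (\<lambda>(h, w). case_prod V w * L (p h - w))"
      unfolding split_beta by (rule continuous_on_mult)
    then show "continuous_on (UNIV \<times> cbox lo hi) (\<lambda>(h, w). case_prod V w * L (p h - w))"
      by (rule continuous_on_subset) simp
  qed simp_all
  then show ?thesis
    by (simp add: L_def p_def)
qed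

lemma conv2_has_real_derivative_along:
  assumes K_supp: "bounded {z. K z \<noteq> 0}"
  shows "((\<lambda>h. conv2 V K (x + h * a) (t + h * b)) has_real_derivative
     conv2 V (\<lambda>z. a * k1 z + b * k2 z) x t) (at 0)"
proof -
  obtain c where "{z. K z \<noteq> 0} \<subseteq> cbox (-c) c"
    using bounded_subset_cbox_symmetric[OF K_supp] by blast
  then have K_zero: "K z = 0" if "z \<notin> cbox (-c) c" for z
    using that by blast
  have K_cont: "continuous_on UNIV K"
    using has_derivative_continuous_on[OF K_deriv] .
  have k_supp: "a * k1 z + b * k2 z = 0" if "z \<notin> cbox (-c) c" for z
  proof -
    have "k1 z = 0 \<and> k2 z = 0"
      using has_derivative_partials_eq_0[OF K_deriv open_Compl[OF closed_cbox]] K_zero that by blast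
    then show ?thesis by simp
  qed
  have "continuous_on UNIV (\<lambda>z. a * k1 z + b * k2 z)"
    by (intro continuous_intros k1_cont k2_cont)
  from conv2_eq_integral_cbox_near[OF V_cont this k_supp, where h = 0 and x = x and t = t]
  have "conv2 V (\<lambda>z. a * k1 z + b * k2 z) x t =
    integral (cbox ((x, t) - c - (\<bar>a\<bar>, \<bar>b\<bar>)) ((x, t) + c + (\<bar>a\<bar>, \<bar>b\<bar>)))
      (\<lambda>w. case_prod V w * (a * k1 ((x, t) - w) + b * k2 ((x, t) - w)))"
    by simp
  with has_real_derivative_integral_kernel_translate
  have "((\<lambda>h. integral (cbox ((x, t) - c - (\<bar>a\<bar>, \<bar>b\<bar>)) ((x, t) + c + (\<bar>a\<bar>, \<bar>b\<bar>)))
      (\<lambda>w. case_prod V w * K ((x + h * a, t + h * b) - w))) has_real_derivative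
      conv2 V (\<lambda>z. a * k1 z + b * k2 z) x t) (at 0)"
    by (simp only:)
  then show ?thesis
  proof (rule has_field_derivative_transform_within_open[OF _ open_ball[of 0 1]])
    fix h :: real assume "h \<in> ball 0 1"
    then have "\<bar>h\<bar> \<le> 1" by simp
    from conv2_eq_integral_cbox_near[OF V_cont K_cont K_zero \<open>\<bar>h\<bar> \<le> 1\<close>]
    show "integral (cbox ((x, t) - c - (\<bar>a\<bar>, \<bar>b\<bar>)) ((x, t) + c + (\<bar>a\<bar>, \<bar>b\<bar>)))
        (\<lambda>w. case_prod V w * K ((x + h * a, t + h * b) - w)) = conv2 V K (x + h * a) (t + h * b)"
      by (rule sym)
  qed simp
qed

lemma conv2_has_real_derivative_fst:
  assumes "bounded {z. K z \<noteq> 0}"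
  shows "((\<lambda>y. conv2 V K y t) has_real_derivative conv2 V k1 x t) (at x)"
proof -
  have "((\<lambda>h. conv2 V K (h + x) t) has_real_derivative conv2 V k1 x t) (at 0)"
    using conv2_has_real_derivative_along[OF assms, of x 1 t 0] by (simp add: add.commute)
  then show ?thesis
    using DERIV_shift[of "\<lambda>y. conv2 V K y t" _ 0 x] by simp
qed

lemma conv2_has_real_derivative_snd:
  assumes "bounded {z. K z \<noteq> 0}"
  shows "((\<lambda>s. conv2 V K x s) has_real_derivative conv2 V k2 x t) (at t)"
proof -
  have "((\<lambda>h. conv2 V K x (h + t)) has_real_derivative conv2 V k2 x t) (at 0)"
    using conv2_has_real_derivative_along[OF assms, of x 0 t 1] by (simp add: add.commute)
  then show ?thesis
    using DERIV_shift[of "\<lambda>s. conv2 V K x s" _ 0 t] by simp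
qed

end

lemma bdd_above_vsol_image:
  fixes \<phi> :: "real \<Rightarrow> real"
  assumes "continuous_on UNIV \<phi>"
  shows "bdd_above ((\<lambda>y. \<phi> (x + t * y)) ` {mu_lo..mu_hi})"
proof -
  have "continuous_on {mu_lo..mu_hi} (\<lambda>y. \<phi> (x + t * y))"
    by (rule continuous_on_compose2[OF assms]) (auto intro!: continuous_intros)
  then show ?thesis
    by (intro bounded_imp_bdd_above compact_imp_bounded compact_continuous_image) auto
qed

lemma vsol_shift_le:
  fixes \<phi> :: "real \<Rightarrow> real"
  assumes mu: "mu_lo \<le> mu_hi" and \<phi>: "continuous_on UNIV \<phi>"
    and "0 \<le> t" "0 \<le> h" and a: "a \<in> {mu_lo..mu_hi}"
  shows "vsol mu_lo mu_hi \<phi> (x + h * a) t \<le> vsol mu_lo mu_hi \<phi> x (t + h)"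
  unfolding vsol_def
proof (rule cSUP_least)
  show "{mu_lo..mu_hi} \<noteq> {}" using mu by simp
  fix y assume y: "y \<in> {mu_lo..mu_hi}"
  obtain y' where y': "y' \<in> {mu_lo..mu_hi}" "h * a + t * y = (t + h) * y'"
  proof (cases "t + h = 0")
    case True
    then have "t = 0" "h = 0" using \<open>0 \<le> t\<close> \<open>0 \<le> h\<close> by simp_all
    then show ?thesis using that[of a] a by simp
  next
    case False
    then have "t + h > 0" using \<open>0 \<le> t\<close> \<open>0 \<le> h\<close> by simp
    define y' where "y' = (h * a + t * y) / (t + h)"
    have "y' = (h / (t + h)) *\<^sub>R a + (t / (t + h)) *\<^sub>R y"
      by (simp add: y'_def add_divide_distrib)
    also have "\<dots> \<in> {mu_lo..mu_hi}"
    proof (rule convexD[OF convex_real_interval(5) a y])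
      show "0 \<le> h / (t + h)" "0 \<le> t / (t + h)"
        using \<open>0 \<le> t\<close> \<open>0 \<le> h\<close> by simp_all
      show "h / (t + h) + t / (t + h) = 1"
        using \<open>t + h > 0\<close> by (metis add.commute add_divide_distrib divide_self less_irrefl)
    qed
    finally have "y' \<in> {mu_lo..mu_hi}" .
    moreover have "h * a + t * y = (t + h) * y'"
      using \<open>t + h > 0\<close> by (simp add: y'_def)
    ultimately show ?thesis by (rule that)
  qed
  have "\<phi> (x + h * a + t * y) = \<phi> (x + (t + h) * y')" using y' by (simp add: add.assoc)
  also have "\<dots> \<le> (SUP y\<in>{mu_lo..mu_hi}. \<phi> (x + (t + h) * y))"
    by (rule cSUP_upper[OF y'(1) bdd_above_vsol_image[OF \<phi>]])
  finally show "\<phi> (x + h * a + t * y) \<le> (SUP y\<in>{mu_lo..mu_hi}. \<phi> (x + (t + h) * y))" .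
qed

lemma lipschitz_on_vsol:
  fixes \<phi> :: "real \<Rightarrow> real"
  assumes mu: "mu_lo \<le> mu_hi" and \<phi>: "L-lipschitz_on UNIV \<phi>"
  shows "(L * (1 + \<bar>mu_lo\<bar> + \<bar>mu_hi\<bar>))-lipschitz_on UNIV (case_prod (vsol mu_lo mu_hi \<phi>))"
proof -
  have "(L * (1 + \<bar>mu_lo\<bar> + \<bar>mu_hi\<bar>))-lipschitz_on UNIV (\<lambda>(x, t). \<phi> (x + t * y))"
    if "y \<in> {mu_lo..mu_hi}" for y
  proof (rule lipschitz_onI)
    fix p q :: "real \<times> real"
    obtain x t x' t' where pq: "p = (x, t)" "q = (x', t')" by (cases p, cases q)
    have "\<bar>(x + t * y) - (x' + t' * y)\<bar> = \<bar>(x - x') + (t - t') * y\<bar>"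
      by (simp add: algebra_simps)
    also have "\<dots> \<le> \<bar>x - x'\<bar> + \<bar>t - t'\<bar> * \<bar>y\<bar>"
      by (metis abs_mult abs_triangle_ineq)
    also have "\<dots> \<le> dist p q + dist p q * (\<bar>mu_lo\<bar> + \<bar>mu_hi\<bar>)"
      using that dist_fst_le[of p q] dist_snd_le[of p q]
      by (intro add_mono mult_mono) (auto simp: pq dist_real_def)
    finally have "\<bar>(x + t * y) - (x' + t' * y)\<bar> \<le> (1 + \<bar>mu_lo\<bar> + \<bar>mu_hi\<bar>) * dist p q"
      by (simp add: algebra_simps)
    then have "dist (\<phi> (x + t * y)) (\<phi> (x' + t' * y)) \<le> L * ((1 + \<bar>mu_lo\<bar> + \<bar>mu_hi\<bar>) * dist p q)"
      using lipschitz_onD[OF \<phi>, of "x + t * y" "x' + t' * y"] lipschitz_on_nonneg[OF \<phi>]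
      by (auto simp: dist_real_def intro: order_trans mult_left_mono)
    then show "dist ((\<lambda>(x, t). \<phi> (x + t * y)) p) ((\<lambda>(x, t). \<phi> (x + t * y)) q)
        \<le> L * (1 + \<bar>mu_lo\<bar> + \<bar>mu_hi\<bar>) * dist p q"
      by (simp add: pq mult.assoc)
  next
    show "0 \<le> L * (1 + \<bar>mu_lo\<bar> + \<bar>mu_hi\<bar>)"
      using lipschitz_on_nonneg[OF \<phi>] by simp
  qed
  moreover have "bdd_above ((\<lambda>y. \<phi> (x + t * y)) ` {mu_lo..mu_hi})" for x t
    by (rule bdd_above_vsol_image[OF lipschitz_on_continuous_on[OF \<phi>]])
  ultimately have "(L * (1 + \<bar>mu_lo\<bar> + \<bar>mu_hi\<bar>))-lipschitz_on UNIV
      (\<lambda>p. SUP y\<in>{mu_lo..mu_hi}. (\<lambda>(x, t). \<phi> (x + t * y)) p)"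
    using mu by (intro lipschitz_on_SUP) (auto simp: split_beta)
  then show ?thesis by (simp add: vsol_def split_beta)
qed

lemma conv2_vsol_shift_le:
  fixes \<phi> :: "real \<Rightarrow> real" and K :: "real \<times> real \<Rightarrow> real"
  assumes mu: "mu_lo \<le> mu_hi" and \<phi>: "L-lipschitz_on UNIV \<phi>"
    and K: "continuous_on UNIV K" "bounded {z. K z \<noteq> 0}" "\<And>z. 0 \<le> K z"
    and K_past: "\<And>y s. K (y, s) \<noteq> 0 \<Longrightarrow> s \<le> t"
    and "0 \<le> h" and a: "a \<in> {mu_lo..mu_hi}"
  shows "conv2 (vsol mu_lo mu_hi \<phi>) K (x + h * a) t \<le> conv2 (vsol mu_lo mu_hi \<phi>) K x (t + h)"
proof (rule conv2_mono[OF lipschitz_on_continuous_on[OF lipschitz_on_vsol[OF mu \<phi>]] K])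
  fix y s assume "K (y, s) \<noteq> 0"
  then have "0 \<le> t - s" using K_past by simp
  from vsol_shift_le[OF mu lipschitz_on_continuous_on[OF \<phi>] this \<open>0 \<le> h\<close> a, of "x - y"]
  show "vsol mu_lo mu_hi \<phi> (x + h * a - y) (t - s) \<le> vsol mu_lo mu_hi \<phi> (x - y) (t + h - s)"
    by (simp add: algebra_simps)
qed

lemma C_inf_imp_continuous: "C_inf f \<Longrightarrow> continuous_on UNIV f"
  by (erule C_inf.cases) (metis continuous_at_imp_continuous_on has_derivative_continuous)

lemma C_inf_has_derivative:
  assumes "C_inf f"
  obtains g1 g2 where "\<And>z. (f has_derivative (\<lambda>h. fst h * g1 z + snd h * g2 z)) (at z)"
    and "continuous_on UNIV g1" and "continuous_on UNIV g2"
  using assms by (cases rule: C_inf.cases) (auto intro: C_inf_imp_continuous)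

lemma zeta_eps_eq: "zeta_eps f \<epsilon> = (\<lambda>z. f (z /\<^sub>R \<epsilon>) / \<epsilon>\<^sup>2)"
  by (auto simp: zeta_eps_def fun_eq_iff divide_inverse_commute)

lemma continuous_on_zeta_eps:
  assumes "continuous_on UNIV f"
  shows "continuous_on UNIV (zeta_eps f \<epsilon>)"
  unfolding zeta_eps_eq divide_inverse
  by (intro continuous_intros continuous_on_compose2[OF assms]) auto

lemma zeta_eps_has_derivative:
  assumes f: "\<And>z. (f has_derivative (\<lambda>h. fst h * g1 z + snd h * g2 z)) (at z)"
  shows "(zeta_eps f \<epsilon> has_derivative
           (\<lambda>h. fst h * (zeta_eps g1 \<epsilon> z / \<epsilon>) + snd h * (zeta_eps g2 \<epsilon> z / \<epsilon>))) (at z)"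
proof -
  have "((\<lambda>z. f (z /\<^sub>R \<epsilon>) * inverse (\<epsilon>\<^sup>2)) has_derivative (\<lambda>h.
      (fst (h /\<^sub>R \<epsilon>) * g1 (z /\<^sub>R \<epsilon>) + snd (h /\<^sub>R \<epsilon>) * g2 (z /\<^sub>R \<epsilon>)) * inverse (\<epsilon>\<^sup>2))) (at z)"
    by (intro has_derivative_mult_left has_derivative_compose[OF _ f] has_derivative_scaleR_right
        has_derivative_ident)
  then show ?thesis
    by (simp add: zeta_eps_eq algebra_simps divide_inverse_commute power2_eq_square)
qed

lemma C_inf_zeta_eps_has_derivative:
  assumes "C_inf \<zeta>"
  obtains k1 k2 where "\<And>z. (zeta_eps \<zeta> \<epsilon> has_derivative (\<lambda>h. fst h * k1 z + snd h * k2 z)) (at z)"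
    and "continuous_on UNIV k1" and "continuous_on UNIV k2"
proof -
  obtain g1 g2 where g: "\<And>z. (\<zeta> has_derivative (\<lambda>h. fst h * g1 z + snd h * g2 z)) (at z)"
    "continuous_on UNIV g1" "continuous_on UNIV g2"
    using C_inf_has_derivative[OF assms] by blast
  show ?thesis
  proof (rule that[OF zeta_eps_has_derivative[OF g(1)]])
    show "continuous_on UNIV (\<lambda>z. zeta_eps g1 \<epsilon> z / \<epsilon>)" "continuous_on UNIV (\<lambda>z. zeta_eps g2 \<epsilon> z / \<epsilon>)"
      unfolding divide_inverse using g(2,3) by (auto intro!: continuous_intros continuous_on_zeta_eps)
  qed
qed

lemma zeta_eps_nonzero_imp:
  assumes supp: "{z. \<zeta> z \<noteq> 0} \<subseteq> {(y, s). \<bar>y\<bar> < 1 \<and> 0 < s \<and> s < 1}"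
    and "0 < \<epsilon>" and "zeta_eps \<zeta> \<epsilon> (y, s) \<noteq> 0"
  shows "\<bar>y\<bar> < \<epsilon> \<and> 0 < s \<and> s < \<epsilon>"
proof -
  have "\<zeta> (y / \<epsilon>, s / \<epsilon>) \<noteq> 0"
    using \<open>zeta_eps \<zeta> \<epsilon> (y, s) \<noteq> 0\<close> by (simp add: zeta_eps_def)
  then have "\<bar>y / \<epsilon>\<bar> < 1" "0 < s / \<epsilon>" "s / \<epsilon> < 1"
    using supp by auto
  then show ?thesis
    using \<open>0 < \<epsilon>\<close> by (simp add: abs_div divide_less_eq zero_less_divide_iff)
qed

lemma bounded_zeta_eps_support:
  assumes "{z. \<zeta> z \<noteq> 0} \<subseteq> {(y, s). \<bar>y\<bar> < 1 \<and> 0 < s \<and> s < 1}" and "0 < \<epsilon>"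
  shows "bounded {z. zeta_eps \<zeta> \<epsilon> z \<noteq> 0}"
proof (rule bounded_subset[OF bounded_cbox[of "(-\<epsilon>, 0)" "(\<epsilon>, \<epsilon>)"]])
  show "{z. zeta_eps \<zeta> \<epsilon> z \<noteq> 0} \<subseteq> cbox (- \<epsilon>, 0) (\<epsilon>, \<epsilon>)"
  proof
    fix z assume "z \<in> {z. zeta_eps \<zeta> \<epsilon> z \<noteq> 0}"
    moreover obtain y s where z: "z = (y, s)" by (cases z)
    ultimately have "\<bar>y\<bar> < \<epsilon> \<and> 0 < s \<and> s < \<epsilon>"
      using zeta_eps_nonzero_imp[OF assms] by simp
    then show "z \<in> cbox (- \<epsilon>, 0) (\<epsilon>, \<epsilon>)"
      by (simp add: z abs_less_iff)
  qed
qed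

theorem lemma4p1:
  fixes \<zeta> :: "real \<times> real \<Rightarrow> real" and \<phi> :: "real \<Rightarrow> real"
    and mu_lo mu_hi \<epsilon> x t :: real
  assumes zeta_smooth: "C_inf \<zeta>"
    and zeta_nonneg: "\<forall>z. \<zeta> z \<ge> 0"
    and zeta_int: "(\<zeta> has_integral 1) UNIV"
    and zeta_supp: "closure {z. \<zeta> z \<noteq> 0} \<subseteq> {(y, s). \<bar>y\<bar> < 1 \<and> 0 < s \<and> s < 1}"
    and mu: "mu_lo \<le> mu_hi"
    and lip: "\<forall>a b. \<bar>\<phi> a - \<phi> b\<bar> \<le> \<bar>a - b\<bar>"
    and eps: "0 < \<epsilon>" "\<epsilon> < 1"
    and t: "\<epsilon> < t"
  shows "deriv (\<lambda>s. conv2 (vsol mu_lo mu_hi \<phi>) (zeta_eps \<zeta> \<epsilon>) x s) t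
           - hamil mu_lo mu_hi (deriv (\<lambda>y. conv2 (vsol mu_lo mu_hi \<phi>) (zeta_eps \<zeta> \<epsilon>) y t) x) \<ge> 0"
proof -
  define V K where "V = vsol mu_lo mu_hi \<phi>" and "K = zeta_eps \<zeta> \<epsilon>"
  obtain k1 k2 where K_deriv: "\<And>z. (K has_derivative (\<lambda>h. fst h * k1 z + snd h * k2 z)) (at z)"
    and k_cont: "continuous_on UNIV k1" "continuous_on UNIV k2"
    unfolding K_def using C_inf_zeta_eps_has_derivative[OF zeta_smooth] by blast
  have \<phi>: "1-lipschitz_on UNIV \<phi>"
    using lip by (intro lipschitz_onI) (auto simp: dist_real_def)
  have supp: "{z. \<zeta> z \<noteq> 0} \<subseteq> {(y, s). \<bar>y\<bar> < 1 \<and> 0 < s \<and> s < 1}"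
    using closure_subset zeta_supp by (rule order_trans)
  have K_bounded: "bounded {z. K z \<noteq> 0}"
    unfolding K_def using bounded_zeta_eps_support[OF supp eps(1)] .
  have K_nonneg: "0 \<le> K z" for z
    using zeta_nonneg by (simp add: K_def zeta_eps_def split_beta)
  have K_past: "s \<le> t" if "K (y, s) \<noteq> 0" for y s
    using zeta_eps_nonzero_imp[OF supp eps(1) that[unfolded K_def]] t by linarith
  note V_cont = lipschitz_on_continuous_on[OF lipschitz_on_vsol[OF mu \<phi>], folded V_def]
  note dt = conv2_has_real_derivative_snd[OF V_cont K_deriv k_cont K_bounded, where x = x and t = t]
  note dx = conv2_has_real_derivative_fst[OF V_cont K_deriv k_cont K_bounded, where x = x and t = t]
  have "a * conv2 V k1 x t \<le> conv2 V k2 x t" if "a \<in> {mu_lo..mu_hi}" for a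
  proof (rule slope_le_of_shift_le[OF dt dx])
    show "conv2 V K (x + h * a) t \<le> conv2 V K x (t + h)" if "0 < h" for h
      unfolding V_def using that \<open>a \<in> {mu_lo..mu_hi}\<close> has_derivative_continuous_on[OF K_deriv]
      by (intro conv2_vsol_shift_le[OF mu \<phi> _ K_bounded K_nonneg K_past]) simp_all
  qed
  then have "hamil mu_lo mu_hi (conv2 V k1 x t) \<le> conv2 V k2 x t"
    unfolding hamil_def using mu by (intro cSUP_least) auto
  then show ?thesis
    using DERIV_imp_deriv[OF dt] DERIV_imp_deriv[OF dx] by (simp add: V_def K_def)
qed

end
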